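(* Let $X$ be a compact metric space and let $f\colon X\to X$ be a homeomorphism. If there exists a Borel probability measure on $X$ which is inner-distal with respect to $f$, then there exists an $f$-invariant Borel probability measure on $X$ which is inner-distal with respect to $f$.
   Context: For a homeomorphism $f\colon X\to X$ of a metric space $(X,d)$, the proximal cell of $x$ is $\mathcal{P}(x)=\{y\in X\colon \inf_{n\in\mathbb{Z}} d(f^n(x),f^n(y))=0\}$. A Borel probability measure $\mu$ is inner-distal with respect to $f$ if $\mu(\operatorname{Int}\mathcal{P}(x))=0$ for every $x\in X$. It is $f$-invariant if $\mu(f^{-1}(A))=\mu(A)$ for every Borel set $A$. *)

theory Defs
  imports "HOL-Probability.Probability"
begin

definition ziter :: "'a set \<Rightarrow> ('a \<Rightarrow> 'a) \<Rightarrow> int \<Rightarrow> 'a \<Rightarrow> 'a" where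
  "ziter X f n = (if 0 \<le> n then f ^^ nat n else (inv_into X f) ^^ nat (- n))"

definition proximal_cell :: "'a::metric_space set \<Rightarrow> ('a \<Rightarrow> 'a) \<Rightarrow> 'a \<Rightarrow> 'a set" where
  "proximal_cell X f x = {y \<in> X. (INF n::int. dist (ziter X f n x) (ziter X f n y)) = 0}"

definition borel_prob_on :: "'a::topological_space set \<Rightarrow> 'a measure \<Rightarrow> bool" where
  "borel_prob_on X M \<longleftrightarrow> prob_space M \<and> sets M = sets (restrict_space borel X)"

definition inner_distal :: "'a::metric_space set \<Rightarrow> ('a \<Rightarrow> 'a) \<Rightarrow> 'a measure \<Rightarrow> bool" where
  "inner_distal X f M \<longleftrightarrow>
     (\<forall>x\<in>X. emeasure M ((top_of_set X) interior_of (proximal_cell X f x)) = 0)"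

definition f_invariant :: "'a set \<Rightarrow> ('a \<Rightarrow> 'a) \<Rightarrow> 'a measure \<Rightarrow> bool" where
  "f_invariant X f M \<longleftrightarrow> (\<forall>A\<in>sets M. emeasure M (f -` A \<inter> X) = emeasure M A)"

end

theory Submission
  imports Defs
begin

text \<open>
  A point of X outside the interiors of all proximal cells exists, since finitely many of these
  null sets cannot cover X. The union of the interiors is mapped into itself by f^-1, so the
  whole forward orbit of such a point avoids it. As in the Krylov-Bogolyubov theorem, a cluster
  point of the empirical averages along this orbit, taken in the compact cube of set functions
  with values in [0,1] (Tychonoff), is a finitely additive f-invariant mean; it vanishes on every
  interior. This mean is turned into a Borel probability measure by the Riesz-type construction
  (inner regularisation on compact sets, then Caratheodory's outer measure); the resulting measure
  is dominated by the mean on open sets and inherits its invariance.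
\<close>

section \<open>Invariant means along an orbit\<close>

lemma compact_Pi_UNIV_unit_interval: "compact (UNIV \<rightarrow> {0..1::real})"
proof -
  have "compactin (product_topology (\<lambda>_. euclidean) UNIV) (PiE UNIV (\<lambda>_::'a. {0..1::real}))"
    by (simp add: compactin_PiE)
  then show ?thesis
    by (simp add: euclidean_product_topology compactin_euclidean_iff PiE_UNIV_domain)
qed

lemma compact_sequence_cluster_point:
  fixes s :: "nat \<Rightarrow> 'a::topological_space"
  assumes "compact K" "\<And>n. s n \<in> K"
  obtains l where "l \<in> K" "inf (nhds l) (filtermap s sequentially) \<noteq> bot"
  using assms(1)[unfolded compact_filter, rule_format, of "filtermap s sequentially"] assms(2)
  by (auto simp: eventually_filtermap filtermap_bot_iff)

lemma cluster_point_continuous_limit: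
  fixes \<Phi> :: "'a::topological_space \<Rightarrow> 'b::t2_space"
  assumes "inf (nhds l) (filtermap s sequentially) \<noteq> bot"
    and "continuous_on UNIV \<Phi>" "(\<lambda>n. \<Phi> (s n)) \<longlonglongrightarrow> c"
  shows "\<Phi> l = c"
proof (rule tendsto_unique[OF assms(1)])
  have "(\<Phi> \<longlongrightarrow> \<Phi> l) (at l)"
    using assms(2) by (simp add: continuous_on_def)
  then show "(\<Phi> \<longlongrightarrow> \<Phi> l) (inf (nhds l) (filtermap s sequentially))"
    by (intro tendsto_mono[OF inf_le1]) (simp add: tendsto_at_iff_tendsto_nhds)
  show "(\<Phi> \<longlongrightarrow> c) (inf (nhds l) (filtermap s sequentially))"
    by (intro tendsto_mono[OF inf_le2]) (simp add: filterlim_filtermap assms(3))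
qed

definition orbit_average :: "('a \<Rightarrow> 'a) \<Rightarrow> 'a \<Rightarrow> nat \<Rightarrow> 'a set \<Rightarrow> real" where
  "orbit_average f x n A = (\<Sum>k<n. indicator A ((f ^^ k) x)) / real n"

lemma orbit_average_bounds: "orbit_average f x n A \<in> {0..1}"
proof -
  have "(\<Sum>k<n. indicator A ((f ^^ k) x) :: real) \<le> (\<Sum>k<n. 1)"
    by (intro sum_mono) (auto simp: indicator_def)
  moreover have "0 \<le> (\<Sum>k<n. indicator A ((f ^^ k) x) :: real)"
    by (intro sum_nonneg) auto
  ultimately show ?thesis
    unfolding orbit_average_def by (cases "n = 0") (auto simp: divide_le_eq_1)
qed

lemma orbit_average_Un:
  "A \<inter> B = {} \<Longrightarrow> orbit_average f x n (A \<union> B) = orbit_average f x n A + orbit_average f x n B"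
  by (simp add: orbit_average_def indicator_disj_union sum.distrib add_divide_distrib)

lemma orbit_average_UNIV: "n > 0 \<Longrightarrow> orbit_average f x n UNIV = 1"
  by (simp add: orbit_average_def)

lemma orbit_average_avoided:
  "\<forall>k. (f ^^ k) x \<notin> A \<Longrightarrow> orbit_average f x n A = 0"
  by (simp add: orbit_average_def indicator_def)

lemma orbit_average_vimage:
  "\<bar>orbit_average f x n (f -` A) - orbit_average f x n A\<bar> \<le> 1 / real n"
proof -
  define b where "b k = (indicator A ((f ^^ k) x) :: real)" for k
  have "(\<Sum>k<n. indicator (f -` A) ((f ^^ k) x) :: real) = (\<Sum>k<n. b (Suc k))"
    by (simp add: b_def indicator_vimage)
  then have "orbit_average f x n (f -` A) - orbit_average f x n A
      = (\<Sum>k<n. b (Suc k) - b k) / real n"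
    unfolding orbit_average_def b_def by (simp add: diff_divide_distrib sum_subtractf)
  also have "\<dots> = (b n - b 0) / real n"
    by (simp only: sum_lessThan_telescope)
  finally have "\<bar>orbit_average f x n (f -` A) - orbit_average f x n A\<bar> = \<bar>b n - b 0\<bar> / real n"
    by simp
  moreover have "\<bar>b n - b 0\<bar> \<le> 1"
    by (simp add: b_def indicator_def)
  ultimately show ?thesis
    by (simp add: divide_right_mono)
qed

lemma exists_invariant_mean_on_orbit:
  fixes f :: "'a \<Rightarrow> 'a" and x :: 'a
  obtains m :: "'a set \<Rightarrow> real" where
    "\<And>A. 0 \<le> m A" "\<And>A B. A \<inter> B = {} \<Longrightarrow> m (A \<union> B) = m A + m B" "m UNIV = 1"
    "\<And>A. m (f -` A) = m A" "\<And>A. \<forall>k. (f ^^ k) x \<notin> A \<Longrightarrow> m A = 0"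
proof -
  have "\<And>n. orbit_average f x n \<in> UNIV \<rightarrow> {0..1}"
    by (intro Pi_I orbit_average_bounds)
  then obtain m where m: "m \<in> UNIV \<rightarrow> {0..1}"
    and cluster: "inf (nhds m) (filtermap (orbit_average f x) sequentially) \<noteq> bot"
    by (rule compact_sequence_cluster_point[where s = "orbit_average f x",
          OF compact_Pi_UNIV_unit_interval]) blast
  note limit = cluster_point_continuous_limit[OF cluster]
  have coordinate: "continuous_on UNIV (\<lambda>\<phi>. \<phi> A)" for A :: "'a set"
    by (rule continuous_on_product_coordinates)
  have "0 \<le> m A" for A
    using m by auto
  moreover have "m (A \<union> B) = m A + m B" if "A \<inter> B = {}" for A B
    using limit[of "\<lambda>\<phi>. \<phi> (A \<union> B) - (\<phi> A + \<phi> B)" 0]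
    by (simp add: orbit_average_Un[OF that] continuous_on_diff continuous_on_add coordinate)
  moreover have "m UNIV = 1"
  proof -
    have "eventually (\<lambda>n. orbit_average f x n UNIV = 1) sequentially"
      using eventually_gt_at_top[of 0] by eventually_elim (rule orbit_average_UNIV)
    then have "(\<lambda>n. orbit_average f x n UNIV) \<longlonglongrightarrow> 1"
      by (rule tendsto_eventually)
    then show ?thesis
      by (rule limit[OF coordinate])
  qed
  moreover have "m (f -` A) = m A" for A
  proof -
    have "(\<lambda>n. orbit_average f x n (f -` A) - orbit_average f x n A) \<longlonglongrightarrow> 0"
      by (rule Lim_null_comparison[OF _ lim_1_over_n]) (simp add: orbit_average_vimage)
    then have "m (f -` A) - m A = 0"
      by (rule limit[rotated]) (intro continuous_on_diff coordinate)
    then show ?thesis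
      by simp
  qed
  moreover have "m A = 0" if "\<forall>k. (f ^^ k) x \<notin> A" for A
    using limit[of "\<lambda>\<phi>. \<phi> A" 0] by (simp add: orbit_average_avoided[OF that] coordinate)
  ultimately show thesis
    by (rule that)
qed

section \<open>Regular Borel measures from finitely additive means\<close>

lemma compact_subset_Un_split:
  fixes C :: "'a::t4_space set"
  assumes "compact C" "open U" "open V" "C \<subseteq> U \<union> V"
  obtains C1 C2 where "compact C1" "compact C2" "C1 \<subseteq> U" "C2 \<subseteq> V" "C = C1 \<union> C2"
proof -
  have "closed (C - U)" "closed (- V)" "(C - U) \<inter> - V = {}"
    using assms by (auto simp: compact_imp_closed closed_Diff)
  then obtain W W' where W: "open W" "open W'" "C - U \<subseteq> W" "- V \<subseteq> W'" "W \<inter> W' = {}"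
    using t4_space by metis
  show thesis
  proof
    show "compact (C \<inter> - W)" "compact (C \<inter> - W')"
      using assms W by (auto intro: compact_Int_closed)
  qed (use W in auto)
qed

lemma homeomorphism_maps_into:
  assumes "homeomorphism X X f g" "x \<in> X"
  shows "f x \<in> X" "g x \<in> X"
  using homeomorphism_image1[OF assms(1)] homeomorphism_image2[OF assms(1)] assms(2) by blast+

locale finitely_additive_mean =
  fixes X :: "'a::t4_space set" and m :: "'a set \<Rightarrow> real"
  assumes compact_X: "compact X"
    and nonneg: "\<And>A. 0 \<le> m A"
    and additive: "\<And>A B. A \<inter> B = {} \<Longrightarrow> m (A \<union> B) = m A + m B"
    and m_UNIV: "m UNIV = 1"
    and m_Int_X: "\<And>A. m (A \<inter> X) = m A"
begin

lemma m_mono: "A \<subseteq> B \<Longrightarrow> m A \<le> m B"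
  using additive[of A "B - A"] nonneg[of "B - A"] by (simp add: Un_absorb1)

lemma m_empty: "m {} = 0"
  using additive[of "{}" "{}"] by simp

lemma m_Un_le: "m (A \<union> B) \<le> m A + m B"
  using additive[of A "B - A"] m_mono[of "B - A" B] by auto

definition compact_content :: "'a set \<Rightarrow> real" where
  "compact_content C = Inf (m ` {W. open W \<and> C \<subseteq> W})"

definition inner_content :: "'a set \<Rightarrow> real" where
  "inner_content W = Sup (compact_content ` {C. compact C \<and> C \<subseteq> W \<inter> X})"

definition outer_content :: "'a set \<Rightarrow> real" where
  "outer_content A = Inf (inner_content ` {W. open W \<and> A \<subseteq> W})"

lemma compact_content_le: "open W \<Longrightarrow> C \<subseteq> W \<Longrightarrow> compact_content C \<le> m W"
  unfolding compact_content_def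
  by (rule cInf_lower) (auto intro: bdd_belowI[where m=0] simp: nonneg)

lemma compact_content_greatest:
  "(\<And>W. open W \<Longrightarrow> C \<subseteq> W \<Longrightarrow> c \<le> m W) \<Longrightarrow> c \<le> compact_content C"
  unfolding compact_content_def by (rule cInf_greatest) auto

lemma compact_content_nonneg: "0 \<le> compact_content C"
  by (rule compact_content_greatest) (simp add: nonneg)

lemma compact_content_le_1: "compact_content C \<le> 1"
  using compact_content_le[of UNIV C] m_UNIV by simp

lemma compact_content_empty: "compact_content {} = 0"
  using compact_content_le[of "{}" "{}"] compact_content_nonneg[of "{}"] m_empty by simp

lemma compact_content_approx:
  assumes "e > 0"
  obtains W where "open W" "C \<subseteq> W" "m W < compact_content C + e"
proof -
  have ne: "m ` {W. open W \<and> C \<subseteq> W} \<noteq> {}"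
    using open_UNIV by blast
  have "Inf (m ` {W. open W \<and> C \<subseteq> W}) < compact_content C + e"
    using assms by (simp add: compact_content_def)
  from cInf_lessD[OF ne this] obtain W where "open W" "C \<subseteq> W" "m W < compact_content C + e"
    by blast
  then show thesis by (rule that)
qed

lemma compact_content_Un_le: "compact_content (C \<union> D) \<le> compact_content C + compact_content D"
proof (rule field_le_epsilon)
  fix e :: real assume "e > 0"
  then obtain U V where U: "open U" "C \<subseteq> U" "m U < compact_content C + e/2"
    and V: "open V" "D \<subseteq> V" "m V < compact_content D + e/2"
    by (metis compact_content_approx half_gt_zero)
  have "compact_content (C \<union> D) \<le> m (U \<union> V)"
    using U V by (intro compact_content_le) auto
  also have "\<dots> \<le> m U + m V" by (rule m_Un_le)
  finally show "compact_content (C \<union> D) \<le> compact_content C + compact_content D + e"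
    using U V by linarith
qed

lemma compact_content_Un_disjoint:
  assumes "compact C" "compact D" "C \<inter> D = {}"
  shows "compact_content C + compact_content D \<le> compact_content (C \<union> D)"
proof (rule compact_content_greatest)
  fix W assume W: "open W" "C \<union> D \<subseteq> W"
  obtain U V where UV: "open U" "open V" "C \<subseteq> U" "D \<subseteq> V" "U \<inter> V = {}"
    using t4_space[of C D] assms compact_imp_closed by metis
  have "compact_content C + compact_content D \<le> m (W \<inter> U) + m (W \<inter> V)"
    using UV W by (intro add_mono compact_content_le) auto
  also have "\<dots> = m ((W \<inter> U) \<union> (W \<inter> V))"
    using UV by (intro additive[symmetric]) auto
  also have "\<dots> \<le> m W" by (rule m_mono) auto
  finally show "compact_content C + compact_content D \<le> m W" .
qed

lemma inner_content_upper:
  "compact C \<Longrightarrow> C \<subseteq> W \<inter> X \<Longrightarrow> compact_content C \<le> inner_content W"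
  unfolding inner_content_def
  by (rule cSup_upper) (auto intro: bdd_aboveI[where M=1] simp: compact_content_le_1)

lemma inner_content_least:
  "(\<And>C. compact C \<Longrightarrow> C \<subseteq> W \<inter> X \<Longrightarrow> compact_content C \<le> c) \<Longrightarrow> inner_content W \<le> c"
  unfolding inner_content_def by (rule cSup_least) auto

lemma inner_content_nonneg: "0 \<le> inner_content W"
  using inner_content_upper[of "{}" W] compact_content_empty by simp

lemma inner_content_le: "open W \<Longrightarrow> inner_content W \<le> m W"
  by (rule inner_content_least) (auto intro: compact_content_le)

lemma inner_content_empty: "inner_content {} = 0"
  using inner_content_le[of "{}"] inner_content_nonneg[of "{}"] m_empty by simp

lemma inner_content_approx:
  assumes "e > 0"
  obtains C where "compact C" "C \<subseteq> W \<inter> X" "inner_content W - e < compact_content C"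
proof -
  have ne: "compact_content ` {C. compact C \<and> C \<subseteq> W \<inter> X} \<noteq> {}"
    using compact_empty by blast
  have "inner_content W - e < Sup (compact_content ` {C. compact C \<and> C \<subseteq> W \<inter> X})"
    using assms by (simp add: inner_content_def)
  from less_cSupD[OF ne this] obtain C where "compact C" "C \<subseteq> W \<inter> X"
      "inner_content W - e < compact_content C"
    by blast
  then show thesis by (rule that)
qed

lemma inner_content_Un_le:
  assumes "open U" "open V"
  shows "inner_content (U \<union> V) \<le> inner_content U + inner_content V"
proof (rule inner_content_least)
  fix C assume C: "compact C" "C \<subseteq> (U \<union> V) \<inter> X"
  then obtain C1 C2 where S: "compact C1" "compact C2" "C1 \<subseteq> U" "C2 \<subseteq> V" "C = C1 \<union> C2"
    using compact_subset_Un_split[of C U V] assms by auto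
  have "compact_content C \<le> compact_content C1 + compact_content C2"
    using S compact_content_Un_le by simp
  also have "\<dots> \<le> inner_content U + inner_content V"
    using S C by (intro add_mono inner_content_upper) auto
  finally show "compact_content C \<le> inner_content U + inner_content V" .
qed

lemma inner_content_finite_UN_le:
  fixes n :: nat
  assumes "\<And>i. open (W i)"
  shows "inner_content (\<Union>i<n. W i) \<le> (\<Sum>i<n. inner_content (W i))"
proof (induction n)
  case 0
  then show ?case by (simp add: inner_content_empty)
next
  case (Suc n)
  have "inner_content (\<Union>i<Suc n. W i) = inner_content ((\<Union>i<n. W i) \<union> W n)"
    by (simp add: lessThan_Suc Un_commute)
  also have "\<dots> \<le> inner_content (\<Union>i<n. W i) + inner_content (W n)"
    using assms by (intro inner_content_Un_le) auto
  finally show ?case using Suc.IH by simp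
qed

lemma inner_content_UN_le:
  assumes "\<And>i. open (W i)" "summable (\<lambda>i. inner_content (W i))"
  shows "inner_content (\<Union>i. W i) \<le> (\<Sum>i. inner_content (W i))"
proof (rule inner_content_least)
  fix C assume C: "compact C" "C \<subseteq> (\<Union>i. W i) \<inter> X"
  obtain I where I: "finite I" "C \<subseteq> (\<Union>i\<in>I. W i)"
    by (rule compactE_image[OF C(1), of UNIV W]) (use assms(1) C(2) in auto)
  then obtain n where "I \<subseteq> {..<n}"
    using finite_nat_iff_bounded by auto
  then have "C \<subseteq> (\<Union>i<n. W i)"
    using I(2) by blast
  then have "compact_content C \<le> inner_content (\<Union>i<n. W i)"
    using C by (intro inner_content_upper) auto
  also have "\<dots> \<le> (\<Sum>i<n. inner_content (W i))"
    using assms(1) by (rule inner_content_finite_UN_le)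
  also have "\<dots> \<le> (\<Sum>i. inner_content (W i))"
    using assms(2) by (rule sum_le_suminf) (auto simp: inner_content_nonneg)
  finally show "compact_content C \<le> (\<Sum>i. inner_content (W i))" .
qed

lemma outer_content_le: "open W \<Longrightarrow> A \<subseteq> W \<Longrightarrow> outer_content A \<le> inner_content W"
  unfolding outer_content_def
  by (rule cInf_lower) (auto intro: bdd_belowI[where m=0] simp: inner_content_nonneg)

lemma outer_content_greatest:
  "(\<And>W. open W \<Longrightarrow> A \<subseteq> W \<Longrightarrow> c \<le> inner_content W) \<Longrightarrow> c \<le> outer_content A"
  unfolding outer_content_def by (rule cInf_greatest) auto

lemma outer_content_nonneg: "0 \<le> outer_content A"
  by (rule outer_content_greatest) (simp add: inner_content_nonneg)

lemma outer_content_le_m: "open W \<Longrightarrow> A \<subseteq> W \<Longrightarrow> outer_content A \<le> m W"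
  using outer_content_le inner_content_le order_trans by blast

lemma outer_content_approx:
  assumes "e > 0"
  obtains W where "open W" "A \<subseteq> W" "inner_content W < outer_content A + e"
proof -
  have ne: "inner_content ` {W. open W \<and> A \<subseteq> W} \<noteq> {}"
    using open_UNIV by blast
  have "Inf (inner_content ` {W. open W \<and> A \<subseteq> W}) < outer_content A + e"
    using assms by (simp add: outer_content_def)
  from cInf_lessD[OF ne this] obtain W
    where "open W" "A \<subseteq> W" "inner_content W < outer_content A + e"
    by blast
  then show thesis by (rule that)
qed

lemma outer_content_mono: "A \<subseteq> B \<Longrightarrow> outer_content A \<le> outer_content B"
  by (rule outer_content_greatest) (auto intro: outer_content_le)

lemma outer_content_empty: "outer_content {} = 0"
  using outer_content_le_m[of "{}" "{}"] outer_content_nonneg[of "{}"] m_empty by simp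

lemma outer_content_compact:
  assumes "compact C" "C \<subseteq> X"
  shows "outer_content C = compact_content C"
proof (rule antisym)
  show "outer_content C \<le> compact_content C"
    by (rule compact_content_greatest) (rule outer_content_le_m)
  show "compact_content C \<le> outer_content C"
    by (rule outer_content_greatest) (use assms in \<open>auto intro: inner_content_upper\<close>)
qed

lemma outer_content_Un_le: "outer_content (A \<union> B) \<le> outer_content A + outer_content B"
proof (rule field_le_epsilon)
  fix e :: real assume "e > 0"
  then obtain U V where U: "open U" "A \<subseteq> U" "inner_content U < outer_content A + e/2"
    and V: "open V" "B \<subseteq> V" "inner_content V < outer_content B + e/2"
    by (metis outer_content_approx half_gt_zero)
  have "outer_content (A \<union> B) \<le> inner_content (U \<union> V)"
    using U V by (intro outer_content_le) auto
  also have "\<dots> \<le> inner_content U + inner_content V"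
    using U V by (intro inner_content_Un_le)
  finally show "outer_content (A \<union> B) \<le> outer_content A + outer_content B + e"
    using U V by linarith
qed

lemma outer_content_UN_le:
  assumes summable: "summable (\<lambda>i. outer_content (A i))"
  shows "outer_content (\<Union>i. A i) \<le> (\<Sum>i. outer_content (A i))"
proof (rule field_le_epsilon)
  fix e :: real assume "e > 0"
  define d where "d i = e * (1/2) ^ Suc i" for i :: nat
  have "d i > 0" for i
    using \<open>e > 0\<close> by (simp add: d_def)
  have "d sums e"
    unfolding d_def using sums_mult[OF power_half_series, of e] by simp
  have "\<forall>i. \<exists>W. open W \<and> A i \<subseteq> W \<and> inner_content W < outer_content (A i) + d i"
    using outer_content_approx[OF \<open>\<And>i. d i > 0\<close>] by metis
  then obtain W where W: "\<And>i. open (W i)" "\<And>i. A i \<subseteq> W i"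
    "\<And>i. inner_content (W i) < outer_content (A i) + d i"
    by metis
  have summable_bound: "summable (\<lambda>i. outer_content (A i) + d i)"
    using summable \<open>d sums e\<close> by (intro summable_add) (auto simp: sums_iff)
  have summable_W: "summable (\<lambda>i. inner_content (W i))"
    using W(3) inner_content_nonneg
    by (intro summable_comparison_test'[OF summable_bound, of 0]) (auto intro: less_imp_le)
  have "outer_content (\<Union>i. A i) \<le> inner_content (\<Union>i. W i)"
    using W by (intro outer_content_le) auto
  also have "\<dots> \<le> (\<Sum>i. inner_content (W i))"
    using W(1) summable_W by (rule inner_content_UN_le)
  also have "\<dots> \<le> (\<Sum>i. outer_content (A i) + d i)"
    using summable_W summable_bound W(3) by (intro suminf_le) (auto intro: less_imp_le)
  also have "\<dots> = (\<Sum>i. outer_content (A i)) + e"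
    using summable \<open>d sums e\<close> by (simp add: suminf_add[symmetric] sums_iff)
  finally show "outer_content (\<Union>i. A i) \<le> (\<Sum>i. outer_content (A i)) + e" .
qed

text \<open>
  Inside an open W containing A, a compact D in W - C and a compact E in W - D are disjoint;
  D almost exhausts W - C, which contains (X - C) \<inter> A, and W - D is an open set containing
  C \<inter> A.
\<close>

lemma outer_content_split:
  assumes C: "compact C" "C \<subseteq> X" and "A \<subseteq> X"
  shows "outer_content (C \<inter> A) + outer_content ((X - C) \<inter> A) = outer_content A"
proof (rule antisym)
  have "(C \<inter> A) \<union> ((X - C) \<inter> A) = A"
    using \<open>A \<subseteq> X\<close> by auto
  then show "outer_content A \<le> outer_content (C \<inter> A) + outer_content ((X - C) \<inter> A)"
    using outer_content_Un_le[of "C \<inter> A" "(X - C) \<inter> A"] by simp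
next
  show "outer_content (C \<inter> A) + outer_content ((X - C) \<inter> A) \<le> outer_content A"
  proof (rule outer_content_greatest)
    fix W assume W: "open W" "A \<subseteq> W"
    show "outer_content (C \<inter> A) + outer_content ((X - C) \<inter> A) \<le> inner_content W"
    proof (rule field_le_epsilon)
      fix e :: real assume "e > 0"
      obtain D where D: "compact D" "D \<subseteq> (W - C) \<inter> X"
        "inner_content (W - C) - e/2 < compact_content D"
        using inner_content_approx[of "e/2" "W - C"] \<open>e > 0\<close> by auto
      obtain E where E: "compact E" "E \<subseteq> (W - D) \<inter> X"
        "inner_content (W - D) - e/2 < compact_content E"
        using inner_content_approx[of "e/2" "W - D"] \<open>e > 0\<close> by auto
      have "compact_content D + compact_content E \<le> compact_content (D \<union> E)"
        using D E by (intro compact_content_Un_disjoint) auto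
      also have "\<dots> \<le> inner_content W"
        using D E by (intro inner_content_upper compact_Un) auto
      finally have "compact_content D + compact_content E \<le> inner_content W" .
      moreover have "outer_content ((X - C) \<inter> A) \<le> inner_content (W - C)"
        using W C by (intro outer_content_le) (auto simp: open_Diff compact_imp_closed)
      moreover have "outer_content (C \<inter> A) \<le> inner_content (W - D)"
        using W D by (intro outer_content_le) (auto simp: open_Diff compact_imp_closed)
      ultimately show "outer_content (C \<inter> A) + outer_content ((X - C) \<inter> A) \<le> inner_content W + e"
        using D E by linarith
    qed
  qed
qed

abbreviation compact_subsets :: "'a set set" where
  "compact_subsets \<equiv> {C. compact C \<and> C \<subseteq> X}"

lemma outer_measure_space_outer_content:
  "outer_measure_space (Pow X) (\<lambda>A. ennreal (outer_content A))"
  unfolding outer_measure_space_def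
proof safe
  show "positive (Pow X) (\<lambda>A. ennreal (outer_content A))"
    by (simp add: positive_def outer_content_empty)
  show "increasing (Pow X) (\<lambda>A. ennreal (outer_content A))"
    by (auto simp: increasing_def intro!: ennreal_leI outer_content_mono)
  show "countably_subadditive (Pow X) (\<lambda>A. ennreal (outer_content A))"
    unfolding countably_subadditive_def
  proof safe
    fix A :: "nat \<Rightarrow> 'a set"
    show "ennreal (outer_content (\<Union>i. A i)) \<le> (\<Sum>i. ennreal (outer_content (A i)))"
    proof (cases "summable (\<lambda>i. outer_content (A i))")
      case True
      then show ?thesis
        by (simp add: suminf_ennreal2 outer_content_nonneg outer_content_UN_le ennreal_leI)
    next
      case False
      then show ?thesis
        by (simp add: summable_iff_suminf_neq_top outer_content_nonneg)
    qed
  qed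
qed

lemma compact_subsets_caratheodory:
  "compact_subsets \<subseteq> lambda_system X (Pow X) (\<lambda>A. ennreal (outer_content A))"
  unfolding lambda_system_def
proof safe
  fix C A assume "compact C" "C \<subseteq> X" "A \<subseteq> X"
  then show "ennreal (outer_content (C \<inter> A)) + ennreal (outer_content ((X - C) \<inter> A))
      = ennreal (outer_content A)"
    using outer_content_split by (simp add: ennreal_plus[symmetric] outer_content_nonneg)
qed

lemma sigma_algebra_compact_subsets: "sigma_algebra X (sigma_sets X compact_subsets)"
  by (rule sigma_algebra_sigma_sets) auto

lemma measure_space_outer_content:
  "measure_space X (sigma_sets X compact_subsets) (\<lambda>A. ennreal (outer_content A))"
proof -
  have ms: "measure_space X (lambda_system X (Pow X) (\<lambda>A. ennreal (outer_content A)))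
      (\<lambda>A. ennreal (outer_content A))"
    by (rule sigma_algebra.caratheodory_lemma[OF sigma_algebra_Pow
          outer_measure_space_outer_content])
  then have "sigma_sets X compact_subsets
      \<subseteq> lambda_system X (Pow X) (\<lambda>A. ennreal (outer_content A))"
    by (intro sigma_algebra.sigma_sets_subset[OF _ compact_subsets_caratheodory])
      (simp add: measure_space_def)
  then show ?thesis
    by (rule measure_down[OF ms sigma_algebra_compact_subsets])
qed

lemma sets_restrict_borel_compact_subsets:
  "sets (restrict_space borel X) = sigma_sets X compact_subsets"
proof -
  have X: "X \<in> sigma_sets UNIV (Collect closed)"
    using compact_X compact_imp_closed by (auto intro: sigma_sets.Basic)
  have "(\<inter>) X ` Collect closed = compact_subsets"
  proof (intro equalityI subsetI)
    fix C assume "C \<in> (\<inter>) X ` Collect closed"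
    then show "C \<in> compact_subsets"
      using compact_X by (auto intro: compact_Int_closed)
  next
    fix C assume "C \<in> compact_subsets"
    then have "C = X \<inter> C" "closed C"
      by (auto simp: compact_imp_closed)
    then show "C \<in> (\<inter>) X ` Collect closed"
      by blast
  qed
  then show ?thesis
    by (simp add: sets_restrict_space borel_eq_closed sigma_sets_Int[OF X])
qed

definition mu :: "'a measure" where
  "mu = measure_of X (sigma_sets X compact_subsets) (\<lambda>A. ennreal (outer_content A))"

lemma sets_mu: "sets mu = sets (restrict_space borel X)"
  unfolding mu_def sets_restrict_borel_compact_subsets
  by (rule sigma_algebra.sets_measure_of_eq[OF sigma_algebra_compact_subsets])

lemma space_mu: "space mu = X"
  unfolding mu_def by (rule sigma_algebra.space_measure_of_eq[OF sigma_algebra_compact_subsets])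

lemma emeasure_mu:
  assumes "A \<in> sets mu"
  shows "emeasure mu A = outer_content A"
proof -
  have "A \<in> sigma_sets X compact_subsets"
    using assms by (simp add: sets_mu sets_restrict_borel_compact_subsets)
  then show ?thesis
    unfolding mu_def using measure_space_outer_content
    by (intro emeasure_measure_of_sigma[OF sigma_algebra_compact_subsets])
      (auto simp: measure_space_def)
qed

lemma emeasure_mu_compact:
  assumes "compact C" "C \<subseteq> X"
  shows "emeasure mu C = compact_content C"
proof -
  have "C \<in> sets mu"
    using assms by (simp add: sets_mu sets_restrict_borel_compact_subsets sigma_sets.Basic)
  then show ?thesis
    by (simp add: emeasure_mu outer_content_compact assms)
qed

lemma borel_prob_on_mu: "borel_prob_on X mu"
proof -
  have "compact_content X = 1"
  proof (rule antisym)
    show "compact_content X \<le> 1"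
      by (rule compact_content_le_1)
    show "1 \<le> compact_content X"
    proof (rule compact_content_greatest)
      fix W assume "open W" "X \<subseteq> W"
      then have "W \<inter> X = UNIV \<inter> X"
        by auto
      then have "m W = m UNIV"
        using m_Int_X[of W] m_Int_X[of UNIV] by simp
      then show "1 \<le> m W"
        by (simp add: m_UNIV)
    qed
  qed
  then have "prob_space mu"
    using emeasure_mu_compact[OF compact_X order.refl] space_mu by (intro prob_spaceI) simp
  then show ?thesis
    by (simp add: borel_prob_on_def sets_mu)
qed

lemma emeasure_mu_null:
  assumes "openin (top_of_set X) U" "m U = 0"
  shows "emeasure mu U = 0"
proof -
  obtain W where W: "open W" "U = X \<inter> W"
    using assms(1) by (auto simp: openin_open)
  have "m W = m (W \<inter> X)"
    by (rule m_Int_X[symmetric])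
  also have "W \<inter> X = U"
    using W(2) by blast
  finally have "outer_content U \<le> 0"
    using outer_content_le_m[OF W(1), of U] W(2) assms(2) by simp
  moreover have "U \<in> sets mu"
    unfolding sets_mu sets_restrict_space W(2) using borel_open[OF W(1)] by (rule imageI)
  ultimately show ?thesis
    using outer_content_nonneg[of U] by (simp add: emeasure_mu)
qed

lemma compact_content_image_le:
  assumes "homeomorphism X X h k" "\<And>A. m (h -` A \<inter> X) = m A" "compact C" "C \<subseteq> X"
  shows "compact_content (k ` C) \<le> compact_content C"
proof (rule compact_content_greatest)
  fix V assume V: "open V" "C \<subseteq> V"
  obtain U where U: "open U" "U \<inter> X = h -` V \<inter> X"
    using homeomorphism_cont1[OF assms(1)] V(1) by (auto simp: continuous_on_open_invariant)
  have "k ` C \<subseteq> U"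
  proof
    fix y assume "y \<in> k ` C"
    then obtain c where c: "c \<in> C" "y = k c"
      by blast
    moreover have "c \<in> X"
      using c(1) assms(4) by blast
    ultimately have "y \<in> X" "h y \<in> V"
      using V(2) homeomorphism_maps_into(2)[OF assms(1)] homeomorphism_apply2[OF assms(1)]
      by auto
    then show "y \<in> U"
      using U(2) by blast
  qed
  then have "compact_content (k ` C) \<le> m U"
    using U(1) by (rule compact_content_le[rotated])
  also have "m U = m V"
    using m_Int_X[of U] assms(2)[of V] U(2) by simp
  finally show "compact_content (k ` C) \<le> m V" .
qed

end

section \<open>Invariance of the measure\<close>

locale invariant_mean = finitely_additive_mean X m
  for X :: "'a::t4_space set" and m +
  fixes f g :: "'a \<Rightarrow> 'a"
  assumes homeo: "homeomorphism X X f g"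
    and m_vimage: "\<And>A. m (f -` A) = m A"
begin

lemma m_vimage_Int: "m (f -` A \<inter> X) = m A"
  using m_Int_X[of "f -` A"] m_vimage[of A] by simp

lemma m_vimage_inverse_Int: "m (g -` A \<inter> X) = m A"
proof -
  have "f -` (g -` A \<inter> X) \<inter> X = A \<inter> X"
    using homeomorphism_apply1[OF homeo] homeomorphism_maps_into[OF homeo] by auto
  then show ?thesis
    using m_vimage_Int[of "g -` A \<inter> X"] m_Int_X[of A] by simp
qed

lemma compact_image_inverse:
  assumes "compact C" "C \<subseteq> X"
  shows "compact (g ` C)" "g ` C \<subseteq> X"
  using assms compact_continuous_image continuous_on_subset homeomorphism_cont2[OF homeo]
    homeomorphism_maps_into(2)[OF homeo] by blast+

lemma vimage_eq_image_inverse: "C \<subseteq> X \<Longrightarrow> f -` C \<inter> X = g ` C"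
  using homeomorphism_apply1[OF homeo] homeomorphism_apply2[OF homeo]
    homeomorphism_maps_into[OF homeo] by (auto simp: image_iff) (metis subsetD)

lemma compact_content_image_inverse:
  assumes "compact C" "C \<subseteq> X"
  shows "compact_content (g ` C) = compact_content C"
proof (rule antisym)
  show "compact_content (g ` C) \<le> compact_content C"
    using homeo m_vimage_Int assms by (rule compact_content_image_le)
  have "f ` g ` C = C"
    using homeomorphism_apply2[OF homeo] assms(2) by (force simp: image_image)
  then show "compact_content C \<le> compact_content (g ` C)"
    using compact_content_image_le[OF homeomorphism_symD[OF homeo] m_vimage_inverse_Int
        compact_image_inverse[OF assms]]
    by simp
qed

lemma measurable_f_mu: "f \<in> mu \<rightarrow>\<^sub>M mu"
proof -
  have "f \<in> restrict_space borel X \<rightarrow>\<^sub>M restrict_space borel X"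
    using homeomorphism_cont1[OF homeo] homeomorphism_maps_into(1)[OF homeo]
    by (intro measurable_restrict_space2)
      (auto simp: space_restrict_space intro: borel_measurable_continuous_on_restrict)
  then show ?thesis
    by (simp add: measurable_cong_sets[OF sets_mu sets_mu])
qed

lemma distr_f_mu: "distr mu mu f = mu"
proof -
  have "prob_space (distr mu mu f)"
    using borel_prob_on_mu measurable_f_mu
    by (auto simp: borel_prob_on_def intro: prob_space.prob_space_distr)
  then have finite_X: "emeasure (distr mu mu f) X \<noteq> \<infinity>"
    using prob_space.emeasure_space_1 by (fastforce simp: space_mu)
  have sets_generated: "sets mu = sigma_sets X compact_subsets"
    by (simp add: sets_mu sets_restrict_borel_compact_subsets)
  show ?thesis
  proof (rule measure_eqI_generator_eq[where E=compact_subsets and \<Omega>=X and A="\<lambda>_. X"])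
    show "Int_stable compact_subsets"
      by (auto simp: Int_stable_def intro: compact_Int)
    show "sets (distr mu mu f) = sigma_sets X compact_subsets"
      using sets_generated by simp
    show "emeasure (distr mu mu f) X \<noteq> \<infinity>" for i :: nat
      by (rule finite_X)
    fix C assume C: "C \<in> compact_subsets"
    then have "f -` C \<inter> X = g ` C"
      by (simp add: vimage_eq_image_inverse)
    moreover have "C \<in> sets mu"
      using C sets_generated by (simp add: sigma_sets.Basic)
    ultimately show "emeasure (distr mu mu f) C = emeasure mu C"
      using C measurable_f_mu compact_image_inverse[of C]
      by (simp add: emeasure_distr space_mu emeasure_mu_compact compact_content_image_inverse)
  qed (use compact_X sets_generated in auto)
qed

lemma f_invariant_mu: "f_invariant X f mu"
  unfolding f_invariant_def
  using distr_f_mu measurable_f_mu by (metis emeasure_distr space_mu)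

end

section \<open>Interiors of proximal cells\<close>

lemma ziter_inverse:
  assumes "homeomorphism X X f g" "z \<in> X"
  shows "ziter X f n (g z) = ziter X f (n - 1) z"
proof -
  have inj: "inj_on f X"
    using assms(1) by (metis homeomorphism_def inj_on_inverseI)
  have inv_g: "inv_into X f y = g y" if "y \<in> X" for y
    using assms(1) that by (intro inv_into_f_eq[OF inj]) (auto simp: homeomorphism_def)
  let ?h = "inv_into X f"
  show ?thesis
  proof (cases "n \<ge> 1")
    case True
    then have "nat n = Suc (nat (n - 1))"
      by simp
    then have "(f ^^ nat n) (g z) = (f ^^ nat (n - 1)) (f (g z))"
      by (simp only: funpow_Suc_right o_apply)
    also have "f (g z) = z"
      using assms by (simp add: homeomorphism_def)
    finally show ?thesis
      using True by (simp add: ziter_def)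
  next
    case False
    then have "ziter X f n (g z) = (?h ^^ nat (- n)) (?h z)"
      using inv_g[OF assms(2)] by (cases "n = 0") (auto simp: ziter_def)
    also have "\<dots> = (?h ^^ Suc (nat (- n))) z"
      by (simp only: funpow_Suc_right o_apply)
    also have "\<dots> = ziter X f (n - 1) z"
      using False by (simp add: ziter_def Suc_nat_eq_nat_zadd1)
    finally show ?thesis .
  qed
qed

lemma proximal_cell_inverse:
  assumes "homeomorphism X X f g" "x \<in> X" "y \<in> proximal_cell X f x"
  shows "g y \<in> proximal_cell X f (g x)"
proof -
  have y: "y \<in> X"
    using assms(3) by (simp add: proximal_cell_def)
  let ?d = "\<lambda>n. dist (ziter X f n x) (ziter X f n y)"
  have "range (\<lambda>n::int. n - 1) = UNIV"
    by (rule surjI[where f = "\<lambda>n. n + 1"]) simp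
  then have "range (\<lambda>n::int. ?d (n - 1)) = range ?d"
    using image_image[of ?d "\<lambda>n. n - 1" UNIV] by simp
  then have "(INF n. dist (ziter X f n (g x)) (ziter X f n (g y))) = (INF n. ?d n)"
    using ziter_inverse[OF assms(1,2)] ziter_inverse[OF assms(1) y] by simp
  moreover have "g y \<in> X"
    using assms(1) y by (auto simp: homeomorphism_def)
  ultimately show ?thesis
    using assms(3) by (simp add: proximal_cell_def)
qed

lemma interior_proximal_cell_inverse:
  assumes "homeomorphism X X f g" "x \<in> X" "z \<in> X"
    and "f z \<in> top_of_set X interior_of proximal_cell X f x"
  shows "z \<in> top_of_set X interior_of proximal_cell X f (g x)"
proof -
  obtain U where U: "openin (top_of_set X) U" "f z \<in> U" "U \<subseteq> proximal_cell X f x"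
    using assms(4) by (auto simp: interior_of_def)
  have "openin (top_of_set X) (g ` U)"
    using homeomorphism_imp_open_map[OF homeomorphism_symD[OF assms(1)] U(1)] .
  moreover have "z \<in> g ` U"
    using assms(1,3) U(2) by (force simp: homeomorphism_def)
  moreover have "g ` U \<subseteq> proximal_cell X f (g x)"
    using U(3) proximal_cell_inverse[OF assms(1,2)] by blast
  ultimately show ?thesis
    by (auto simp: interior_of_def)
qed

lemma orbit_avoids_interiors_of_proximal_cells:
  assumes "homeomorphism X X f g" "x\<^sub>0 \<in> X"
    and "\<And>x. x \<in> X \<Longrightarrow> x\<^sub>0 \<notin> top_of_set X interior_of proximal_cell X f x"
  shows "(f ^^ k) x\<^sub>0 \<in> X \<and> (\<forall>x\<in>X. (f ^^ k) x\<^sub>0 \<notin> top_of_set X interior_of proximal_cell X f x)"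
proof (induction k)
  case 0
  then show ?case
    using assms(2,3) by simp
next
  case (Suc k)
  let ?z = "(f ^^ k) x\<^sub>0"
  have "f ?z \<in> X" and g_X: "\<And>x. x \<in> X \<Longrightarrow> g x \<in> X"
    using Suc.IH assms(1) by (auto simp: homeomorphism_def)
  moreover have "f ?z \<notin> top_of_set X interior_of proximal_cell X f x" if "x \<in> X" for x
    using interior_proximal_cell_inverse[OF assms(1) that] Suc.IH g_X[OF that] by blast
  ultimately show ?case
    by simp
qed

lemma exists_point_outside_interiors_of_proximal_cells:
  assumes "compact X" "borel_prob_on X M" "inner_distal X f M"
  obtains x\<^sub>0 where "x\<^sub>0 \<in> X" "\<And>x. x \<in> X \<Longrightarrow> x\<^sub>0 \<notin> top_of_set X interior_of proximal_cell X f x"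
proof -
  let ?I = "\<lambda>x. top_of_set X interior_of proximal_cell X f x"
  have "\<exists>T. open T \<and> ?I x = X \<inter> T" for x
    using openin_interior_of[of "top_of_set X" "proximal_cell X f x"] openin_open by metis
  then obtain T where T: "\<And>x. open (T x)" "\<And>x. ?I x = X \<inter> T x"
    by metis
  have sets_M: "sets M = sets (restrict_space borel X)" and "prob_space M"
    using assms(2) by (auto simp: borel_prob_on_def)
  then have space_M: "space M = X"
    using sets_eq_imp_space_eq[OF sets_M] by (simp add: space_restrict_space)
  have null: "?I x \<in> null_sets M" if "x \<in> X" for x
    using assms(3) that borel_open[OF T(1)]
    by (auto simp: inner_distal_def null_sets_def sets_M sets_restrict_space T(2))
  show thesis
  proof (rule ccontr)
    assume "\<not> thesis"
    then have cover: "X \<subseteq> (\<Union>x\<in>X. T x)"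
      using that T(2) by blast
    obtain J where J: "J \<subseteq> X" "finite J" "X \<subseteq> (\<Union>x\<in>J. T x)"
      by (rule compactE_image[OF assms(1) _ cover]) (use T(1) in blast)+
    have "(\<Union>x\<in>J. ?I x) \<in> null_sets M"
      using J null by (intro null_sets_UN' countable_finite) auto
    moreover have "space M \<subseteq> (\<Union>x\<in>J. ?I x)"
      using J(3) T(2) space_M by blast
    ultimately have "space M \<in> null_sets M"
      by (rule null_sets_subset[OF _ sets.top])
    then show False
      using prob_space.emeasure_space_1[OF \<open>prob_space M\<close>] by (simp add: null_setsD1)
  qed
qed

lemma exists_invariant_mean_null_on_proximal_interiors:
  assumes "compact X" "homeomorphism X X f g" "borel_prob_on X M" "inner_distal X f M"
  obtains m where "invariant_mean X m f g"
    "\<And>x. x \<in> X \<Longrightarrow> m (top_of_set X interior_of proximal_cell X f x) = 0"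
proof -
  obtain x\<^sub>0 where "x\<^sub>0 \<in> X"
    "\<And>x. x \<in> X \<Longrightarrow> x\<^sub>0 \<notin> top_of_set X interior_of proximal_cell X f x"
    by (rule exists_point_outside_interiors_of_proximal_cells[OF assms(1,3,4)]) (rule that)
  note orbit = orbit_avoids_interiors_of_proximal_cells[OF assms(2) this]
  obtain m :: "'a set \<Rightarrow> real" where m: "\<And>A. 0 \<le> m A"
    "\<And>A B. A \<inter> B = {} \<Longrightarrow> m (A \<union> B) = m A + m B" "m UNIV = 1"
    "\<And>A. m (f -` A) = m A" "\<And>A. \<forall>k. (f ^^ k) x\<^sub>0 \<notin> A \<Longrightarrow> m A = 0"
    by (rule exists_invariant_mean_on_orbit[of f x\<^sub>0]) (rule that)
  have "m (A - X) = 0" for A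
    using orbit by (intro m(5)) blast
  then have "m (A \<inter> X) = m A" for A
    using m(2)[of "A \<inter> X" "A - X"] by (simp add: Int_Diff_Un Int_Diff_disjoint)
  with assms(1,2) m(1-4) have "invariant_mean X m f g"
    by unfold_locales
  moreover have "m (top_of_set X interior_of proximal_cell X f x) = 0" if "x \<in> X" for x
    using orbit that by (intro m(5)) blast
  ultimately show thesis
    by (rule that)
qed

theorem theorem2p14:
  fixes X :: "'a::metric_space set" and f :: "'a \<Rightarrow> 'a"
  assumes "compact X"
    and "\<exists>g. homeomorphism X X f g"
    and "\<exists>M. borel_prob_on X M \<and> inner_distal X f M"
  shows "\<exists>\<mu>. borel_prob_on X \<mu> \<and> f_invariant X f \<mu> \<and> inner_distal X f \<mu>"
proof -
  obtain g where homeo: "homeomorphism X X f g"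
    using assms(2) by blast
  obtain M where "borel_prob_on X M" "inner_distal X f M"
    using assms(3) by blast
  then obtain m where "invariant_mean X m f g"
    and null: "\<And>x. x \<in> X \<Longrightarrow> m (top_of_set X interior_of proximal_cell X f x) = 0"
    by (rule exists_invariant_mean_null_on_proximal_interiors[OF assms(1) homeo]) (rule that)
  then interpret invariant_mean X m f g
    by simp
  have "inner_distal X f mu"
    unfolding inner_distal_def using null by (auto intro: emeasure_mu_null openin_interior_of)
  then show ?thesis
    using borel_prob_on_mu f_invariant_mu by blast
qed

end
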